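(* Let $R$ be a commutative ring with identity and $M$ a non-zero comultiplication $R$-module. If $G'(M)$ contains a cycle, then the girth of $G'(M)$ is $3$.
   Context: An $R$-module $M$ is a comultiplication module if for every submodule $N$ of $M$ there is an ideal $I$ of $R$ with $N=\mathrm{Ann}_M(I)$. A submodule $N$ of $M$ is large if $N\cap L\neq 0$ for every non-zero submodule $L$ of $M$. The large sum graph $G'(M)$ has as vertex set the set of all non-zero non-large submodules of $M$, and two distinct vertices $N,K$ are adjacent iff $N+K$ is non-large in $M$. *)

theory Defs
  imports "HOL-Algebra.Module" "HOL-Algebra.Ideal"
begin

definition ann_M :: "('a, 'b) module \<Rightarrow> 'a set \<Rightarrow> 'b set" where
  "ann_M M I = {x \<in> carrier M. \<forall>a\<in>I. a \<odot>\<^bsub>M\<^esub> x = \<zero>\<^bsub>M\<^esub>}"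

definition comultiplication_module :: "('a, 'c) ring_scheme \<Rightarrow> ('a, 'b) module \<Rightarrow> bool" where
  "comultiplication_module R M \<longleftrightarrow> module R M \<and>
     (\<forall>N. submodule N R M \<longrightarrow> (\<exists>I. ideal I R \<and> N = ann_M M I))"

definition msum :: "('a, 'b) module \<Rightarrow> 'b set \<Rightarrow> 'b set \<Rightarrow> 'b set" where
  "msum M N K = {x \<oplus>\<^bsub>M\<^esub> y | x y. x \<in> N \<and> y \<in> K}"

definition large_submodule :: "('a, 'c) ring_scheme \<Rightarrow> ('a, 'b) module \<Rightarrow> 'b set \<Rightarrow> bool" where
  "large_submodule R M N \<longleftrightarrow> submodule N R M \<and>
     (\<forall>L. submodule L R M \<and> L \<noteq> {\<zero>\<^bsub>M\<^esub>} \<longrightarrow> N \<inter> L \<noteq> {\<zero>\<^bsub>M\<^esub>})"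

definition lsg_vertices :: "('a, 'c) ring_scheme \<Rightarrow> ('a, 'b) module \<Rightarrow> 'b set set" where
  "lsg_vertices R M = {N. submodule N R M \<and> N \<noteq> {\<zero>\<^bsub>M\<^esub>} \<and> \<not> large_submodule R M N}"

definition lsg_adj :: "('a, 'c) ring_scheme \<Rightarrow> ('a, 'b) module \<Rightarrow> 'b set \<Rightarrow> 'b set \<Rightarrow> bool" where
  "lsg_adj R M N K \<longleftrightarrow> N \<in> lsg_vertices R M \<and> K \<in> lsg_vertices R M \<and> N \<noteq> K \<and>
     \<not> large_submodule R M (msum M N K)"

definition is_cycle :: "'v set \<Rightarrow> ('v \<Rightarrow> 'v \<Rightarrow> bool) \<Rightarrow> 'v list \<Rightarrow> bool" where
  "is_cycle V E cs \<longleftrightarrow> length cs \<ge> 3 \<and> distinct cs \<and> set cs \<subseteq> V \<and>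
     (\<forall>i < length cs. E (cs ! i) (cs ! ((i + 1) mod length cs)))"

definition has_cycle :: "'v set \<Rightarrow> ('v \<Rightarrow> 'v \<Rightarrow> bool) \<Rightarrow> bool" where
  "has_cycle V E \<longleftrightarrow> (\<exists>cs. is_cycle V E cs)"

definition girth :: "'v set \<Rightarrow> ('v \<Rightarrow> 'v \<Rightarrow> bool) \<Rightarrow> nat" where
  "girth V E = (LEAST n. \<exists>cs. is_cycle V E cs \<and> length cs = n)"

end

theory Submission
  imports Defs
begin

text \<open>
  If two adjacent vertices N, K are incomparable, then
  N, K, N + K is a triangle, since N + K is itself a non-zero non-large submodule containing
  both. Otherwise look at a path A - B - C of the cycle: if B is not below both neighbours,
  comparability of A, B and of B, C forces A + C to lie in one of A, B, C, hence to be
  non-large, and A, B, C is a triangle. Two consecutive paths of a cycle cannot both have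
  their middle vertex below its neighbours, because the middle vertices are comparable
  and distinct.
\<close>

lemma is_cycle_triangle_iff:
  "is_cycle V E [x, y, z] \<longleftrightarrow> distinct [x, y, z] \<and> {x, y, z} \<subseteq> V \<and> E x y \<and> E y z \<and> E z x"
proof -
  let ?cs = "[x, y, z]"
  have "(\<forall>i<length ?cs. E (?cs ! i) (?cs ! ((i + 1) mod length ?cs))) \<longleftrightarrow> E x y \<and> E y z \<and> E z x"
  proof
    assume "\<forall>i<length ?cs. E (?cs ! i) (?cs ! ((i + 1) mod length ?cs))"
    from this[rule_format, of 0] this[rule_format, of 1] this[rule_format, of 2]
    show "E x y \<and> E y z \<and> E z x"
      by simp
  next
    assume edges: "E x y \<and> E y z \<and> E z x"
    show "\<forall>i<length ?cs. E (?cs ! i) (?cs ! ((i + 1) mod length ?cs))"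
    proof (intro allI impI)
      fix i :: nat
      assume "i < length ?cs"
      then have "i = 0 \<or> i = 1 \<or> i = 2"
        by auto
      then show "E (?cs ! i) (?cs ! ((i + 1) mod length ?cs))"
        using edges by auto
    qed
  qed
  then show ?thesis
    unfolding is_cycle_def by simp
qed

lemma girth_eq_3I:
  assumes "is_cycle V E [x, y, z]"
  shows "girth V E = 3"
  unfolding girth_def
proof (rule Least_equality)
  show "\<exists>cs. is_cycle V E cs \<and> length cs = 3"
    using assms by (intro exI[of _ "[x, y, z]"]) simp
  show "3 \<le> n" if "\<exists>cs. is_cycle V E cs \<and> length cs = n" for n
    using that unfolding is_cycle_def by auto
qed

lemma is_cycle_obtain_walk4:
  assumes "is_cycle V E cs"
  obtains a b c d where "E a b" "E b c" "E c d" "a \<noteq> c" "b \<noteq> c" "b \<noteq> d"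
proof
  let ?n = "length cs"
  have n: "?n \<ge> 3" and dist: "distinct cs"
    and adj: "\<And>i. i < ?n \<Longrightarrow> E (cs ! i) (cs ! ((i + 1) mod ?n))"
    using assms unfolding is_cycle_def by auto
  have neq: "cs ! i \<noteq> cs ! j" if "i < ?n" "j < ?n" "i \<noteq> j" for i j
    using dist that by (simp add: nth_eq_iff_index_eq)
  have "?n - 1 + 1 = ?n"
    using n by arith
  then show "E (cs ! (?n - 1)) (cs ! 0)"
    using adj[of "?n - 1"] n by simp
  have pos: "0 < ?n" "1 < ?n" "2 < ?n"
    using n by auto
  then show "E (cs ! 0) (cs ! 1)" "E (cs ! 1) (cs ! 2)"
    using adj[of 0] adj[of 1] by (simp_all add: numeral_2_eq_2)
  show "cs ! (?n - 1) \<noteq> cs ! 1" "cs ! 0 \<noteq> cs ! 1" "cs ! 0 \<noteq> cs ! 2"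
    using neq[of "?n - 1" 1] neq[of 0 1] neq[of 0 2] n pos by auto
qed

lemma msum_memI: "x \<in> N \<Longrightarrow> y \<in> K \<Longrightarrow> x \<oplus>\<^bsub>M\<^esub> y \<in> msum M N K"
  unfolding msum_def by blast

lemma msum_memE:
  assumes "z \<in> msum M N K"
  obtains x y where "z = x \<oplus>\<^bsub>M\<^esub> y" "x \<in> N" "y \<in> K"
  using assms unfolding msum_def by blast

text \<open>The notions of the large sum graph are stated for module records, whereas the locale
  \<open>module\<close> allows extensible records; this locale pins down the type.\<close>

locale large_sum_graph = module R M for R :: "('a, 'c) ring_scheme" and M :: "('a, 'b) module"
begin

lemma submodule_zero_closed: "submodule N R M \<Longrightarrow> \<zero>\<^bsub>M\<^esub> \<in> N"
  using subgroup.one_closed[OF submodule.axioms(1)] by fastforce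

lemma msum_submodule:
  assumes N: "submodule N R M" and K: "submodule K R M"
  shows "submodule (msum M N K) R M"
proof (rule submoduleI)
  note sN = submoduleE[OF N] and sK = submoduleE[OF K]
  show "msum M N K \<subseteq> carrier M"
    using sN(1) sK(1) by (blast elim: msum_memE)
  show "\<zero>\<^bsub>M\<^esub> \<in> msum M N K"
    using msum_memI[where M = M, OF submodule_zero_closed[OF N] submodule_zero_closed[OF K]] by simp
  show "\<ominus>\<^bsub>M\<^esub> z \<in> msum M N K" if "z \<in> msum M N K" for z
  proof -
    obtain x y where xy: "z = x \<oplus>\<^bsub>M\<^esub> y" "x \<in> N" "y \<in> K"
      using \<open>z \<in> msum M N K\<close> by (rule msum_memE)
    then have "\<ominus>\<^bsub>M\<^esub> z = \<ominus>\<^bsub>M\<^esub> x \<oplus>\<^bsub>M\<^esub> \<ominus>\<^bsub>M\<^esub> y"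
      using sN(1) sK(1) by (simp add: minus_add subsetD)
    also have "\<dots> \<in> msum M N K"
      using xy sN(3) sK(3) by (simp add: msum_memI)
    finally show ?thesis .
  qed
  show "z \<oplus>\<^bsub>M\<^esub> w \<in> msum M N K" if "z \<in> msum M N K" "w \<in> msum M N K" for z w
  proof -
    obtain x y where xy: "z = x \<oplus>\<^bsub>M\<^esub> y" "x \<in> N" "y \<in> K"
      using \<open>z \<in> msum M N K\<close> by (rule msum_memE)
    obtain x' y' where xy': "w = x' \<oplus>\<^bsub>M\<^esub> y'" "x' \<in> N" "y' \<in> K"
      using \<open>w \<in> msum M N K\<close> by (rule msum_memE)
    have "z \<oplus>\<^bsub>M\<^esub> w = (x \<oplus>\<^bsub>M\<^esub> x') \<oplus>\<^bsub>M\<^esub> (y \<oplus>\<^bsub>M\<^esub> y')"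
      using xy xy' sN(1) sK(1) by (simp add: a_ac subsetD)
    also have "\<dots> \<in> msum M N K"
      using xy xy' sN(5) sK(5) by (simp add: msum_memI)
    finally show ?thesis .
  qed
  show "a \<odot>\<^bsub>M\<^esub> z \<in> msum M N K" if "a \<in> carrier R" "z \<in> msum M N K" for a z
  proof -
    obtain x y where xy: "z = x \<oplus>\<^bsub>M\<^esub> y" "x \<in> N" "y \<in> K"
      using \<open>z \<in> msum M N K\<close> by (rule msum_memE)
    then have "a \<odot>\<^bsub>M\<^esub> z = a \<odot>\<^bsub>M\<^esub> x \<oplus>\<^bsub>M\<^esub> a \<odot>\<^bsub>M\<^esub> y"
      using \<open>a \<in> carrier R\<close> sN(1) sK(1) by (simp add: smult_r_distr subsetD)
    also have "\<dots> \<in> msum M N K"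
      using xy \<open>a \<in> carrier R\<close> sN(4) sK(4) by (simp add: msum_memI)
    finally show ?thesis .
  qed
qed

lemma msum_upper1: "submodule K R M \<Longrightarrow> N \<subseteq> carrier M \<Longrightarrow> N \<subseteq> msum M N K"
  unfolding msum_def using submodule_zero_closed by (force intro: r_zero[symmetric])

lemma msum_commute: "N \<subseteq> carrier M \<Longrightarrow> K \<subseteq> carrier M \<Longrightarrow> msum M N K = msum M K N"
  unfolding msum_def by (auto, (metis a_comm subsetD)+)

lemma msum_upper2: "submodule N R M \<Longrightarrow> K \<subseteq> carrier M \<Longrightarrow> K \<subseteq> msum M N K"
  using msum_upper1 msum_commute submoduleE(1) by metis

lemma msum_least: "submodule D R M \<Longrightarrow> N \<subseteq> D \<Longrightarrow> K \<subseteq> D \<Longrightarrow> msum M N K \<subseteq> D"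
  unfolding msum_def using submoduleE(5) by blast

lemma not_large_submodule_subset:
  assumes "submodule D R M" "\<not> large_submodule R M D" "N \<subseteq> D"
  shows "\<not> large_submodule R M N"
proof
  assume large: "large_submodule R M N"
  obtain L where L: "submodule L R M" "L \<noteq> {\<zero>\<^bsub>M\<^esub>}" "D \<inter> L = {\<zero>\<^bsub>M\<^esub>}"
    using assms(1,2) unfolding large_submodule_def by blast
  then have "N \<inter> L \<noteq> {\<zero>\<^bsub>M\<^esub>}"
    using large unfolding large_submodule_def by blast
  moreover have "\<zero>\<^bsub>M\<^esub> \<in> N \<inter> L"
    using large L(1) submodule_zero_closed unfolding large_submodule_def by blast
  ultimately show False
    using L(3) assms(3) by blast
qed

lemma lsg_vertex_submodule: "N \<in> lsg_vertices R M \<Longrightarrow> submodule N R M"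
  unfolding lsg_vertices_def by blast

lemma lsg_vertex_carrier: "N \<in> lsg_vertices R M \<Longrightarrow> N \<subseteq> carrier M"
  using lsg_vertex_submodule submoduleE(1) by blast

lemma lsg_adjI_subset_vertex:
  assumes "N \<in> lsg_vertices R M" "K \<in> lsg_vertices R M" "N \<noteq> K"
    and "D \<in> lsg_vertices R M" "N \<subseteq> D" "K \<subseteq> D"
  shows "lsg_adj R M N K"
proof -
  have "submodule D R M" "\<not> large_submodule R M D"
    using assms(4) unfolding lsg_vertices_def by auto
  then have "\<not> large_submodule R M (msum M N K)"
    using not_large_submodule_subset msum_least assms(5,6) by blast
  then show ?thesis
    unfolding lsg_adj_def using assms(1-3) by blast
qed

lemma lsg_triangle_incomparable:
  assumes adj: "lsg_adj R M N K" and "\<not> N \<subseteq> K" "\<not> K \<subseteq> N"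
  shows "is_cycle (lsg_vertices R M) (lsg_adj R M) [N, K, msum M N K]"
proof -
  let ?S = "msum M N K"
  have N: "N \<in> lsg_vertices R M" and K: "K \<in> lsg_vertices R M"
    and not_large: "\<not> large_submodule R M ?S"
    using adj unfolding lsg_adj_def by auto
  have NS: "N \<subseteq> ?S" and KS: "K \<subseteq> ?S"
    using msum_upper1 msum_upper2 lsg_vertex_submodule lsg_vertex_carrier N K by auto
  have "?S \<noteq> {\<zero>\<^bsub>M\<^esub>}"
    using N NS submodule_zero_closed[OF lsg_vertex_submodule[OF N]]
    unfolding lsg_vertices_def by blast
  then have S: "?S \<in> lsg_vertices R M"
    unfolding lsg_vertices_def
    using msum_submodule lsg_vertex_submodule N K not_large by blast
  have "N \<noteq> ?S" "K \<noteq> ?S"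
    using NS KS assms(2,3) by blast+
  then have "lsg_adj R M K ?S" "lsg_adj R M ?S N"
    using lsg_adjI_subset_vertex N K S NS KS by blast+
  moreover have "N \<noteq> K"
    using assms(2) by blast
  ultimately show ?thesis
    unfolding is_cycle_triangle_iff using N K S adj \<open>N \<noteq> ?S\<close> \<open>K \<noteq> ?S\<close> by simp
qed

lemma lsg_triangle_path:
  assumes AB: "lsg_adj R M A B" and BC: "lsg_adj R M B C" and "A \<noteq> C"
    and not_below: "\<not> (B \<subseteq> A \<and> B \<subseteq> C)"
  shows "\<exists>x y z. is_cycle (lsg_vertices R M) (lsg_adj R M) [x, y, z]"
proof (cases "(A \<subseteq> B \<or> B \<subseteq> A) \<and> (B \<subseteq> C \<or> C \<subseteq> B)")
  case False
  then show ?thesis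
    using lsg_triangle_incomparable[OF AB] lsg_triangle_incomparable[OF BC] by blast
next
  case True
  have vertices: "A \<in> lsg_vertices R M" "B \<in> lsg_vertices R M" "C \<in> lsg_vertices R M"
    and "A \<noteq> B" "B \<noteq> C"
    using AB BC unfolding lsg_adj_def by auto
  obtain D where "D \<in> {A, B, C}" "A \<subseteq> D" "C \<subseteq> D"
    using True not_below by blast
  then have "lsg_adj R M C A"
    using lsg_adjI_subset_vertex vertices \<open>A \<noteq> C\<close> by blast
  then have "is_cycle (lsg_vertices R M) (lsg_adj R M) [A, B, C]"
    unfolding is_cycle_triangle_iff
    using vertices \<open>A \<noteq> B\<close> \<open>B \<noteq> C\<close> \<open>A \<noteq> C\<close> AB BC by simp
  then show ?thesis
    by blast
qed

lemma lsg_triangle_walk: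
  assumes "lsg_adj R M A B" "lsg_adj R M B C" "lsg_adj R M C D"
    and "A \<noteq> C" "B \<noteq> C" "B \<noteq> D"
  shows "\<exists>x y z. is_cycle (lsg_vertices R M) (lsg_adj R M) [x, y, z]"
proof (cases "B \<subseteq> A \<and> B \<subseteq> C")
  case True
  then have "\<not> (C \<subseteq> B \<and> C \<subseteq> D)"
    using \<open>B \<noteq> C\<close> by blast
  then show ?thesis
    using lsg_triangle_path assms(2,3,6) by blast
next
  case False
  then show ?thesis
    using lsg_triangle_path assms(1,2,4) by blast
qed

end

theorem theorem2p8:
  fixes R :: "('a, 'c) ring_scheme" and M :: "('a, 'b) module"
  assumes "cring R"
    and "comultiplication_module R M"
    and "carrier M \<noteq> {\<zero>\<^bsub>M\<^esub>}"
    and "has_cycle (lsg_vertices R M) (lsg_adj R M)"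
  shows "girth (lsg_vertices R M) (lsg_adj R M) = 3"
proof -
  interpret large_sum_graph R M
    using assms(2) unfolding comultiplication_module_def large_sum_graph_def by blast
  obtain cs where "is_cycle (lsg_vertices R M) (lsg_adj R M) cs"
    using assms(4) unfolding has_cycle_def by blast
  then obtain A B C D where "lsg_adj R M A B" "lsg_adj R M B C" "lsg_adj R M C D"
    and "A \<noteq> C" "B \<noteq> C" "B \<noteq> D"
    by (rule is_cycle_obtain_walk4)
  then obtain x y z where "is_cycle (lsg_vertices R M) (lsg_adj R M) [x, y, z]"
    using lsg_triangle_walk by blast
  then show ?thesis
    by (rule girth_eq_3I)
qed

end
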